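(* If a graph $G$ is a $k$-AND-PCG, then its complement $\overline{G}$ is a $2k$-OR-PCG.
   Context: All trees are unrooted with edges weighted by nonnegative reals; $d_T(u,v)$ is the weight of the path between leaves $u,v$ of $T$. A graph $H$ is a PCG if there exist a tree $T$ with leaf set $V(H)$ and an interval $I$ of nonnegative reals such that $\{u,v\}\in E(H)$ iff $d_T(u,v)\in I$. A graph $G=(V,E)$ is a $k$-OR-PCG (resp. $k$-AND-PCG) if there exist $k$ PCGs $G_1,\ldots,G_k$ on vertex set $V$ with $E=\bigcup_i E(G_i)$ (resp. $E=\bigcap_i E(G_i)$). $\overline{G}$ denotes the complement graph. *)

theory Defs
  imports "HOL-Analysis.Analysis"
begin

definition pairs :: "'a set \<Rightarrow> 'a set set" where
  "pairs V = {e. \<exists>x y. e = {x, y} \<and> x \<noteq> y \<and> x \<in> V \<and> y \<in> V}"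

definition is_graph :: "'a set \<Rightarrow> 'a set set \<Rightarrow> bool" where
  "is_graph V E \<longleftrightarrow> finite V \<and> E \<subseteq> pairs V"

definition complement :: "'a set \<Rightarrow> 'a set set \<Rightarrow> 'a set set" where
  "complement V E = pairs V - E"

definition tree_path :: "'n set set \<Rightarrow> 'n \<Rightarrow> 'n \<Rightarrow> 'n list \<Rightarrow> bool" where
  "tree_path T u v p \<longleftrightarrow> p \<noteq> [] \<and> hd p = u \<and> last p = v \<and> distinct p \<and>
     (\<forall>i. Suc i < length p \<longrightarrow> {p ! i, p ! Suc i} \<in> T)"

definition is_tree :: "'n set \<Rightarrow> 'n set set \<Rightarrow> bool" where
  "is_tree N T \<longleftrightarrow> finite N \<and> N \<noteq> {} \<and> T \<subseteq> pairs N \<and>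
     (\<forall>u\<in>N. \<forall>v\<in>N. \<exists>!p. tree_path T u v p)"

definition leaves :: "'n set \<Rightarrow> 'n set set \<Rightarrow> 'n set" where
  "leaves N T = {x \<in> N. card {e \<in> T. x \<in> e} \<le> 1}"

definition tree_dist :: "'n set set \<Rightarrow> ('n set \<Rightarrow> real) \<Rightarrow> 'n \<Rightarrow> 'n \<Rightarrow> real" where
  "tree_dist T w u v =
     (let p = (THE p. tree_path T u v p)
      in (\<Sum>i<length p - 1. w {p ! i, p ! Suc i}))"

text \<open>Pairwise compatibility graphs. Internal tree nodes are drawn from a fresh copy of nat;
  the leaves of the tree are exactly the vertices of the graph (tagged with Inl).\<close>
definition is_pcg :: "'a set \<Rightarrow> 'a set set \<Rightarrow> bool" where
  "is_pcg V E \<longleftrightarrow> is_graph V E \<and>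
     (\<exists>(N :: ('a + nat) set) T w (I :: real set).
        is_tree N T \<and> leaves N T = Inl ` V \<and> (\<forall>e\<in>T. w e \<ge> 0) \<and>
        is_interval I \<and> I \<subseteq> {0..} \<and>
        (\<forall>u\<in>V. \<forall>v\<in>V. u \<noteq> v \<longrightarrow> ({u, v} \<in> E \<longleftrightarrow> tree_dist T w (Inl u) (Inl v) \<in> I)))"

definition k_or_pcg :: "nat \<Rightarrow> 'a set \<Rightarrow> 'a set set \<Rightarrow> bool" where
  "k_or_pcg k V E \<longleftrightarrow> (\<exists>G :: nat \<Rightarrow> 'a set set.
      (\<forall>i<k. is_pcg V (G i)) \<and> E = (\<Union>i<k. G i))"

definition k_and_pcg :: "nat \<Rightarrow> 'a set \<Rightarrow> 'a set set \<Rightarrow> bool" where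
  "k_and_pcg k V E \<longleftrightarrow> (\<exists>G :: nat \<Rightarrow> 'a set set.
      (\<forall>i<k. is_pcg V (G i)) \<and> E = {e \<in> pairs V. \<forall>i<k. e \<in> G i})"

end

theory Submission
  imports Defs
begin

text \<open>A PCG with interval \<open>I\<close> has as complement the pairs whose tree distance lies in
  \<open>[0,\<infinity>) - I\<close>. This set splits into the distances below \<open>I\<close> and those above \<open>I\<close>, both
  intervals, so the complement of a PCG is the union of two PCGs on the same tree. The
  complement of an intersection of \<open>k\<close> PCGs is the union of their \<open>k\<close> complements, hence a
  union of \<open>2k\<close> PCGs.\<close>

lemma tree_path_rev:
  assumes "tree_path T u v p"
  shows "tree_path T v u (rev p)"
  unfolding tree_path_def
proof (intro conjI allI impI)
  show "rev p \<noteq> []" "hd (rev p) = v" "last (rev p) = u" "distinct (rev p)"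
    using assms unfolding tree_path_def by (auto simp: hd_rev last_rev)
  fix i assume i: "Suc i < length (rev p)"
  let ?j = "length p - 1 - Suc i"
  have "{p ! ?j, p ! Suc ?j} \<in> T"
    using assms i unfolding tree_path_def by auto
  moreover have "rev p ! i = p ! Suc ?j" "rev p ! Suc i = p ! ?j"
    using i by (simp_all add: rev_nth Suc_diff_Suc)
  ultimately show "{rev p ! i, rev p ! Suc i} \<in> T" by (simp add: insert_commute)
qed

lemma tree_path_The:
  assumes "is_tree N T" "u \<in> N" "v \<in> N"
  shows "tree_path T u v (THE p. tree_path T u v p)"
  using assms unfolding is_tree_def by (metis theI')

lemma tree_dist_sym:
  assumes "is_tree N T" "u \<in> N" "v \<in> N"
  shows "tree_dist T w u v = tree_dist T w v u"
proof -
  define p where "p = (THE p. tree_path T u v p)"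
  define m where "m = length p - 1"
  define g where "g j = w {p ! j, p ! Suc j}" for j
  have "tree_path T u v p"
    using tree_path_The[OF assms] by (simp add: p_def)
  then have rev: "(THE p. tree_path T v u p) = rev p"
    using assms unfolding is_tree_def by (metis tree_path_rev the1_equality)
  have "tree_dist T w v u = (\<Sum>i<m. w {rev p ! i, rev p ! Suc i})"
    unfolding tree_dist_def rev m_def Let_def by simp
  also have "\<dots> = (\<Sum>i<m. g (m - Suc i))"
  proof (rule sum.cong)
    fix i assume "i \<in> {..<m}"
    then have "rev p ! i = p ! Suc (m - Suc i)" "rev p ! Suc i = p ! (m - Suc i)"
      unfolding m_def by (simp_all add: rev_nth Suc_diff_Suc)
    then show "w {rev p ! i, rev p ! Suc i} = g (m - Suc i)"
      unfolding g_def by (simp add: insert_commute)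
  qed simp
  also have "\<dots> = (\<Sum>i<m. g i)"
    by (rule sum.nat_diff_reindex)
  also have "\<dots> = tree_dist T w u v"
    unfolding tree_dist_def p_def[symmetric] m_def g_def Let_def by simp
  finally show ?thesis by simp
qed

lemma tree_dist_nonneg:
  assumes "is_tree N T" "u \<in> N" "v \<in> N" "\<forall>e\<in>T. w e \<ge> 0"
  shows "tree_dist T w u v \<ge> 0"
  using tree_path_The[OF assms(1-3)] assms(4)
  unfolding tree_dist_def tree_path_def Let_def by (intro sum_nonneg) auto

definition dist_graph :: "'a set \<Rightarrow> ('a + 'b) set set \<Rightarrow> (('a + 'b) set \<Rightarrow> real) \<Rightarrow> real set
    \<Rightarrow> 'a set set" where
  "dist_graph V T w I =
     {{u, v} |u v. u \<in> V \<and> v \<in> V \<and> u \<noteq> v \<and> tree_dist T w (Inl u) (Inl v) \<in> I}"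

lemma pairs_eqI:
  assumes "A \<subseteq> pairs V" "B \<subseteq> pairs V"
    and "\<And>u v. u \<in> V \<Longrightarrow> v \<in> V \<Longrightarrow> u \<noteq> v \<Longrightarrow> {u, v} \<in> A \<longleftrightarrow> {u, v} \<in> B"
  shows "A = B"
  using assms unfolding pairs_def by blast

lemma doubleton_in_pairs: "u \<in> V \<Longrightarrow> v \<in> V \<Longrightarrow> u \<noteq> v \<Longrightarrow> {u, v} \<in> pairs V"
  unfolding pairs_def by blast

lemma dist_graph_subset_pairs: "dist_graph V T w I \<subseteq> pairs V"
  unfolding dist_graph_def pairs_def by blast

lemma dist_graph_Un: "dist_graph V T w (I \<union> J) = dist_graph V T w I \<union> dist_graph V T w J"
  unfolding dist_graph_def by blast

lemma doubleton_in_dist_graph_iff: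
  assumes "is_tree N T" "leaves N T = Inl ` V" "u \<in> V" "v \<in> V" "u \<noteq> v"
  shows "{u, v} \<in> dist_graph V T w I \<longleftrightarrow> tree_dist T w (Inl u) (Inl v) \<in> I"
proof
  have leaf: "Inl x \<in> N" if "x \<in> V" for x
    using assms(2) that unfolding leaves_def by blast
  assume "{u, v} \<in> dist_graph V T w I"
  then obtain a b where "{u, v} = {a, b}" "a \<in> V" "b \<in> V" "tree_dist T w (Inl a) (Inl b) \<in> I"
    unfolding dist_graph_def by blast
  then show "tree_dist T w (Inl u) (Inl v) \<in> I"
    using tree_dist_sym[OF assms(1) leaf leaf] by (metis doubleton_eq_iff)
qed (use assms in \<open>auto simp: dist_graph_def\<close>)

lemma is_pcg_dist_graph:
  fixes N :: "('a + nat) set"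
  assumes "finite V" "is_tree N T" "leaves N T = Inl ` V" "\<forall>e\<in>T. w e \<ge> 0"
    and "is_interval I" "I \<subseteq> {0..}"
  shows "is_pcg V (dist_graph V T w I)"
proof -
  have "is_graph V (dist_graph V T w I)"
    unfolding is_graph_def using assms(1) dist_graph_subset_pairs by blast
  moreover have "\<forall>u\<in>V. \<forall>v\<in>V. u \<noteq> v \<longrightarrow>
      ({u, v} \<in> dist_graph V T w I \<longleftrightarrow> tree_dist T w (Inl u) (Inl v) \<in> I)"
    by (simp add: doubleton_in_dist_graph_iff[OF assms(2,3)])
  ultimately show ?thesis
    unfolding is_pcg_def using assms(2-6)
    by (intro conjI exI[of _ N] exI[of _ T] exI[of _ w] exI[of _ I]) simp_all
qed

lemma is_pcgE:
  assumes "is_pcg V G"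
  obtains N :: "('a + nat) set" and T w I
  where "is_tree N T" "leaves N T = Inl ` V" "\<forall>e\<in>T. w e \<ge> 0"
    and "is_interval I" "I \<subseteq> {0..}" "G = dist_graph V T w I"
proof -
  from assms obtain N :: "('a + nat) set" and T w I
    where tree: "is_tree N T" "leaves N T = Inl ` V" "\<forall>e\<in>T. w e \<ge> 0"
      and I: "is_interval I" "I \<subseteq> {0..}"
      and edge_iff: "\<forall>u\<in>V. \<forall>v\<in>V. u \<noteq> v \<longrightarrow> ({u, v} \<in> G \<longleftrightarrow> tree_dist T w (Inl u) (Inl v) \<in> I)"
    unfolding is_pcg_def by (elim conjE exE)
  have "G = dist_graph V T w I"
  proof (rule pairs_eqI[of _ V])
    show "G \<subseteq> pairs V"
      using assms by (simp add: is_pcg_def is_graph_def)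
    show "dist_graph V T w I \<subseteq> pairs V"
      by (rule dist_graph_subset_pairs)
    fix u v assume "u \<in> V" "v \<in> V" "u \<noteq> v"
    then show "{u, v} \<in> G \<longleftrightarrow> {u, v} \<in> dist_graph V T w I"
      using edge_iff by (simp add: doubleton_in_dist_graph_iff[OF tree(1,2)])
  qed
  with tree I show thesis by (rule that)
qed

lemma complement_dist_graph:
  assumes "is_tree N T" "leaves N T = Inl ` V" "\<forall>e\<in>T. w e \<ge> 0"
  shows "complement V (dist_graph V T w I) = dist_graph V T w ({0..} - I)"
proof -
  have nonneg: "tree_dist T w (Inl u) (Inl v) \<ge> 0" if "u \<in> V" "v \<in> V" for u v
    using assms that by (intro tree_dist_nonneg[OF assms(1)]) (auto simp: leaves_def)
  show ?thesis
    unfolding complement_def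
  proof (rule pairs_eqI)
    show "pairs V - dist_graph V T w I \<subseteq> pairs V" by blast
    show "dist_graph V T w ({0..} - I) \<subseteq> pairs V" by (rule dist_graph_subset_pairs)
    fix u v assume "u \<in> V" "v \<in> V" "u \<noteq> v"
    then show "{u, v} \<in> pairs V - dist_graph V T w I \<longleftrightarrow> {u, v} \<in> dist_graph V T w ({0..} - I)"
      using nonneg by (simp add: doubleton_in_pairs doubleton_in_dist_graph_iff[OF assms(1,2)])
  qed
qed

lemma is_interval_strict_lower_bounds: "is_interval {x::real. \<forall>y\<in>I. x < y}"
  unfolding is_interval_1 by auto

lemma is_interval_strict_upper_bounds: "is_interval {x::real. \<forall>y\<in>I. y < x}"
  unfolding is_interval_1 by auto

lemma Compl_interval_real:
  assumes "is_interval (I :: real set)"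
  shows "- I = {x. \<forall>y\<in>I. x < y} \<union> {x. \<forall>y\<in>I. y < x}"
proof (intro set_eqI iffI)
  fix x assume "x \<in> - I"
  show "x \<in> {x. \<forall>y\<in>I. x < y} \<union> {x. \<forall>y\<in>I. y < x}"
  proof (rule ccontr)
    assume "x \<notin> {x. \<forall>y\<in>I. x < y} \<union> {x. \<forall>y\<in>I. y < x}"
    then obtain a b where "a \<in> I" "b \<in> I" "a \<le> x" "x \<le> b"
      by (auto simp: not_less)
    with assms \<open>x \<in> - I\<close> show False
      unfolding is_interval_1 by blast
  qed
qed auto

lemma k_or_pcg_2_Un:
  assumes "is_pcg V A" "is_pcg V B"
  shows "k_or_pcg 2 V (A \<union> B)"
  unfolding k_or_pcg_def
proof (intro exI conjI allI impI)
  let ?G = "\<lambda>i::nat. if i = 0 then A else B"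
  show "is_pcg V (?G i)" for i using assms by simp
  show "A \<union> B = (\<Union>i<2. ?G i)" by (auto simp: less_2_cases_iff)
qed

lemma k_or_pcg_2_complement:
  assumes "is_pcg V G"
  shows "k_or_pcg 2 V (complement V G)"
proof -
  obtain N :: "('a + nat) set" and T w I
    where tree: "is_tree N T" "leaves N T = Inl ` V" "\<forall>e\<in>T. w e \<ge> 0"
      and I: "is_interval I" "I \<subseteq> {0..}" and G: "G = dist_graph V T w I"
    using assms by (rule is_pcgE)
  have "finite V"
    using assms unfolding is_pcg_def is_graph_def by simp
  define below where "below = {0..} \<inter> {x. \<forall>y\<in>I. x < y}"
  define above where "above = {0..} \<inter> {x. \<forall>y\<in>I. y < x}"
  have intervals: "is_interval below" "is_interval above"
    unfolding below_def above_def
    by (simp_all add: is_interval_Int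
        is_interval_strict_lower_bounds is_interval_strict_upper_bounds)
  have "{0..} - I = below \<union> above"
    using Compl_interval_real[OF I(1)] unfolding below_def above_def by blast
  then have "complement V G = dist_graph V T w below \<union> dist_graph V T w above"
    by (simp add: G complement_dist_graph[OF tree] dist_graph_Un)
  moreover have "is_pcg V (dist_graph V T w J)" if "J \<in> {below, above}" for J
    using that intervals \<open>finite V\<close> tree
    by (intro is_pcg_dist_graph) (auto simp: below_def above_def)
  ultimately show ?thesis
    by (simp add: k_or_pcg_2_Un)
qed

lemma k_or_pcg_UN:
  assumes "\<forall>i<k. k_or_pcg m V (F i)"
  shows "k_or_pcg (m * k) V (\<Union>i<k. F i)"
proof -
  obtain H where H: "\<And>i. i < k \<Longrightarrow> (\<forall>l<m. is_pcg V (H i l)) \<and> F i = (\<Union>l<m. H i l)"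
    using assms unfolding k_or_pcg_def by metis
  define G where "G j = H (j mod k) (j div k)" for j
  have index_bounds: "j mod k < k" "j div k < m" if "j < m * k" for j
  proof -
    from that have "0 < k" by (intro gr0I) simp
    then show "j mod k < k" by simp
    show "j div k < m" using that by (simp add: less_mult_imp_div_less)
  qed
  have "(\<Union>i<k. F i) \<subseteq> (\<Union>j<m * k. G j)"
  proof
    fix e assume "e \<in> (\<Union>i<k. F i)"
    then obtain i l where il: "i < k" "l < m" "e \<in> H i l"
      using H by blast
    have "l * k + i < Suc l * k" using il(1) by simp
    also have "\<dots> \<le> m * k" using il(2) by (intro mult_le_mono1) simp
    finally have "l * k + i < m * k" .
    moreover have "e \<in> G (l * k + i)"
      using il by (simp add: G_def)
    ultimately show "e \<in> (\<Union>j<m * k. G j)" by blast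
  qed
  moreover have "(\<Union>j<m * k. G j) \<subseteq> (\<Union>i<k. F i)"
    using H index_bounds unfolding G_def by blast
  ultimately show ?thesis
    unfolding k_or_pcg_def using H index_bounds
    by (intro exI[of _ G]) (auto simp: G_def)
qed

theorem theorem9:
  fixes V :: "'a set" and E :: "'a set set" and k :: nat
  assumes "is_graph V E"
    and "k_and_pcg k V E"
  shows "k_or_pcg (2 * k) V (complement V E)"
proof -
  obtain G where G: "\<forall>i<k. is_pcg V (G i)" and E: "E = {e \<in> pairs V. \<forall>i<k. e \<in> G i}"
    using assms(2) unfolding k_and_pcg_def by blast
  have "\<forall>i<k. k_or_pcg 2 V (complement V (G i))"
    using G k_or_pcg_2_complement by blast
  then have "k_or_pcg (2 * k) V (\<Union>i<k. complement V (G i))"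
    by (rule k_or_pcg_UN)
  moreover have "complement V E = (\<Union>i<k. complement V (G i))"
    unfolding complement_def E by blast
  ultimately show ?thesis by simp
qed

end
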